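(* Let $q\ge2$ and let $U$ be a $q\times q$ row-stochastic matrix with strictly positive entries. There is a constant $C_4$ independent of $n$ such that for all sufficiently large $n$ the following holds. Let $k\ge1$, let $\mathbf{t}_1,\mathbf{t}_1',\dots,\mathbf{t}_k,\mathbf{t}_k'\in\mathcal{N}_{q,n}$, let $p_1,\dots,p_k\ge0$, and let $Q_1,Q_2$ be distributions on $\mathcal{N}_{q,n}$ with $$Q_2(\mathbf{t})=Q_1(\mathbf{t})+\sum_{i=1}^kp_i\big(\mathbb{1}\{\mathbf{t}=\mathbf{t}_i'\}-\mathbb{1}\{\mathbf{t}=\mathbf{t}_i\}\big)\quad\forall\mathbf{t}\in\mathcal{N}_{q,n}.$$ If $Q_{\mathrm{op},1},Q_{\mathrm{op},2}$ are the output distributions of $q$-NCC$_{n,U}$ for inputs $Q_1,Q_2$, then $$d_{\mathrm{TV}}(Q_{\mathrm{op},1},Q_{\mathrm{op},2})\le\frac{C_4(\log n)^{(q-2)/2}}{\sqrt n}\sum_{i=1}^kp_i\,d_{\mathrm c}(\mathbf{t}_i,\mathbf{t}_i').$$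
   Context: $\mathcal{N}_{q,n}=\{\mathbf{t}\in\mathbb{Z}_{\ge0}^q:\sum_it_i=n\}$ is the set of compositions of vectors in $[1:q]^n$ (composition of $\mathbf{x}$: $(N(1|\mathbf{x}),\dots,N(q|\mathbf{x}))$, $N(c|\mathbf{x})=|\{i:x_i=c\}|$). The $q$-ary noisy composition channel $q$-NCC$_{n,U}$ has input/output alphabet $\mathcal{N}_{q,n}$ and $P_{q\text{-NC}}(\mathbf{w}|\mathbf{t})=\sum_{\mathbf{z}\text{ of composition }\mathbf{w}}\prod_iU(z_i|x_i)$ for any $\mathbf{x}$ of composition $\mathbf{t}$; the output distribution for input distribution $Q$ is $\sum_{\mathbf{t}}Q(\mathbf{t})P_{q\text{-NC}}(\cdot|\mathbf{t})$. $d_{\mathrm c}(\mathbf{t},\mathbf{t}')=\frac12\sum_i|t_i-t_i'|$. $d_{\mathrm{TV}}(P,Q)=\frac12\sum|P-Q|$. Logarithms base 2. *)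

theory Defs
  imports "HOL-Analysis.Analysis"
begin

text \<open>Alphabet [1:q] is represented 0-indexed as {0..<q}. Vectors in [1:q]^n are lists
of length n with entries < q. A composition is a function nat => nat vanishing outside {0..<q}.\<close>

definition words :: "nat \<Rightarrow> nat \<Rightarrow> nat list set" where
  "words q n = {xs. length xs = n \<and> set xs \<subseteq> {..<q}}"

definition composition :: "nat list \<Rightarrow> (nat \<Rightarrow> nat)" where
  "composition xs = (\<lambda>c. count_list xs c)"

definition comps :: "nat \<Rightarrow> nat \<Rightarrow> (nat \<Rightarrow> nat) set" where
  "comps q n = {t. (\<forall>i\<ge>q. t i = 0) \<and> (\<Sum>i<q. t i) = n}"

text \<open>U a b = U(b|a): probability that input symbol a is output as b.\<close>
definition ncc :: "nat \<Rightarrow> nat \<Rightarrow> (nat \<Rightarrow> nat \<Rightarrow> real) \<Rightarrow> (nat \<Rightarrow> nat) \<Rightarrow> (nat \<Rightarrow> nat) \<Rightarrow> real" where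
  "ncc q n U w t =
     (let x = (SOME x. x \<in> words q n \<and> composition x = t) in
      \<Sum>z\<in>{z \<in> words q n. composition z = w}. \<Prod>i<n. U (x ! i) (z ! i))"

definition ncc_output :: "nat \<Rightarrow> nat \<Rightarrow> (nat \<Rightarrow> nat \<Rightarrow> real) \<Rightarrow> ((nat \<Rightarrow> nat) \<Rightarrow> real) \<Rightarrow> (nat \<Rightarrow> nat) \<Rightarrow> real" where
  "ncc_output q n U Q w = (\<Sum>t\<in>comps q n. Q t * ncc q n U w t)"

definition is_dist :: "nat \<Rightarrow> nat \<Rightarrow> ((nat \<Rightarrow> nat) \<Rightarrow> real) \<Rightarrow> bool" where
  "is_dist q n Q \<longleftrightarrow> (\<forall>t\<in>comps q n. Q t \<ge> 0) \<and> (\<Sum>t\<in>comps q n. Q t) = 1"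

definition d_tv :: "nat \<Rightarrow> nat \<Rightarrow> ((nat \<Rightarrow> nat) \<Rightarrow> real) \<Rightarrow> ((nat \<Rightarrow> nat) \<Rightarrow> real) \<Rightarrow> real" where
  "d_tv q n P Q = (1/2) * (\<Sum>w\<in>comps q n. \<bar>P w - Q w\<bar>)"

definition d_c :: "nat \<Rightarrow> (nat \<Rightarrow> nat) \<Rightarrow> (nat \<Rightarrow> nat) \<Rightarrow> real" where
  "d_c q t t' = (1/2) * (\<Sum>i<q. \<bar>real (t i) - real (t' i)\<bar>)"

end

theory Submission
  imports Defs "HOL-Combinatorics.Permutations"
begin

text \<open>The output law of a mixture of inputs is the mixture of the output laws, so the total
  variation distance is at most half of the sum of p_i times the L1 distance between the output
  laws of t_i and t_i'. Joining t_i to t_i' by d_c(t_i, t_i') moves of a single symbol, it suffices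
  to compare the inputs a r and b r that differ in one position. Their output laws are mixtures,
  with weights U(a, .) and U(b, .), of the laws F_d of the output of r together with one extra output
  symbol d. Let c be the most frequent symbol of r and G the m >= n/q positions of c r carrying c.
  These positions are exchangeable, so F_d(w) = E [composition z = w] N_d z / (m U(c, d)) with N_d
  the (binomial) number of positions of G with output d. A second moment bound gives
  E |N_d / (m U(c, d)) - 1| <= 1 / sqrt (m U(c, d)), so a single move changes the output law by at
  most 2 sqrt (q / (u n)) in L1, u the least entry of U. No logarithmic factor is needed.\<close>

section \<open>Words and compositions\<close>

lemma finite_words: "finite (words q n)"
proof -
  have "words q n = {xs. set xs \<subseteq> {..<q} \<and> length xs = n}"
    unfolding words_def by auto
  then show ?thesis
    using finite_lists_length_eq[of "{..<q}" n] by simp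
qed

lemma words_Suc: "words q (Suc n) = (\<lambda>(d, z). d # z) ` ({..<q} \<times> words q n)"
proof -
  have "xs \<in> (\<lambda>(d, z). d # z) ` ({..<q} \<times> words q n)" if "xs \<in> words q (Suc n)" for xs
    using that unfolding words_def by (cases xs) force+
  then show ?thesis
    unfolding words_def by auto
qed

lemma sum_words_Suc:
  "(\<Sum>z\<in>words q (Suc n). g z) = (\<Sum>d<q. \<Sum>z\<in>words q n. g (d # z))"
proof -
  have "inj_on (\<lambda>(d, z). d # z) ({..<q} \<times> words q n)"
    by (auto simp: inj_on_def)
  then show ?thesis
    unfolding words_Suc by (simp add: sum.reindex sum.cartesian_product case_prod_unfold)
qed

lemma nth_less_bound: "set x \<subseteq> {..<q} \<Longrightarrow> k < length x \<Longrightarrow> x ! k < q"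
  using nth_mem by blast

lemma composition_Cons: "composition (d # z) = (composition z)(d := composition z d + 1)"
  unfolding composition_def by auto

lemma composition_permute_list:
  assumes "\<sigma> permutes {..<length z}"
  shows "composition (permute_list \<sigma> z) = composition z"
  using mset_permute_list[OF assms]
  unfolding composition_def by (auto simp: fun_eq_iff simp flip: count_mset)

lemma composition_in_comps:
  assumes "z \<in> words q n"
  shows "composition z \<in> comps q n"
proof -
  have z: "set z \<subseteq> {..<q}" "length z = n"
    using assms unfolding words_def by auto
  then have "composition z i = 0" if "q \<le> i" for i
    using that unfolding composition_def by (auto simp: count_list_0_iff)
  moreover have "(\<Sum>i<q. composition z i) = n"
    using sum_count_set[OF z(1)] z(2) unfolding composition_def by simp
  ultimately show ?thesis
    unfolding comps_def by blast
qed

lemma count_list_replicate: "count_list (replicate n c) d = (if c = d then n else 0)"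
  by (induction n) auto

lemma word_of_composition:
  assumes "t \<in> comps q n"
  obtains y where "y \<in> words q n" "composition y = t"
proof
  define y where "y = concat (map (\<lambda>c. replicate (t c) c) [0..<q])"
  have t: "\<forall>i\<ge>q. t i = 0" "(\<Sum>i<q. t i) = n"
    using assms unfolding comps_def by auto
  have "count_list y d = (\<Sum>c<q. if c = d then t c else 0)" for d
    unfolding y_def count_list_concat
    by (simp add: comp_def count_list_replicate interv_sum_list_conv_sum_set_nat atLeast0LessThan)
  then show "composition y = t"
    using t(1) unfolding composition_def by (auto simp: fun_eq_iff not_less)
  then show "y \<in> words q n"
    using t(2) unfolding y_def words_def
    by (auto simp: length_concat comp_def interv_sum_list_conv_sum_set_nat atLeast0LessThan)
qed

lemma finite_comps: "finite (comps q n)"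
proof -
  have "comps q n \<subseteq> composition ` words q n"
    by (auto elim: word_of_composition)
  then show ?thesis
    using finite_words finite_subset by blast
qed

lemma sum_fun_upd_pred:
  fixes f :: "'a \<Rightarrow> nat"
  assumes "finite A" "a \<in> A" "0 < f a"
  shows "sum (f(a := f a - 1)) A + 1 = sum f A"
proof -
  have "sum (f(a := f a - 1)) (A - {a}) = sum f (A - {a})"
    by (intro sum.cong) auto
  then show ?thesis
    using assms by (simp add: sum.remove[of A a])
qed

lemma comps_eqI:
  assumes t: "t \<in> comps q n" and t': "t' \<in> comps q n" and le: "\<And>i. i < q \<Longrightarrow> t i \<le> t' i"
  shows "t = t'"
proof
  fix i
  have "(\<Sum>i<q. t' i - t i) = (\<Sum>i<q. t' i) - (\<Sum>i<q. t i)"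
    using le by (intro sum_subtractf_nat) auto
  also have "\<dots> = 0"
    using t t' unfolding comps_def by simp
  finally have "\<forall>i<q. t' i - t i = 0"
    by simp
  then show "t i = t' i"
    using le t t' unfolding comps_def by (cases "i < q") (auto simp: le_antisym)
qed

lemma comps_exists_less:
  assumes "t \<in> comps q n" "t' \<in> comps q n" "t \<noteq> t'"
  obtains i where "i < q" "t i < t' i"
  using comps_eqI[OF assms(2,1)] assms(3) by (metis not_le)

lemma word_Cons_of_composition:
  assumes t: "t \<in> comps q n" and a: "a < q" "0 < t a"
  obtains n' r where "n = Suc n'" "r \<in> words q n'" "composition (a # r) = t"
proof -
  define s where "s = t(a := t a - 1)"
  have "sum s {..<q} + 1 = n"
    using sum_fun_upd_pred[of "{..<q}" a t] a t unfolding s_def comps_def by simp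
  then obtain n' where n': "n = Suc n'" "sum s {..<q} = n'"
    by auto
  then have "s \<in> comps q n'"
    using t a unfolding s_def comps_def by auto
  then obtain r where r: "r \<in> words q n'" "composition r = s"
    by (rule word_of_composition)
  have "composition (a # r) = t"
    using a unfolding composition_Cons r(2) s_def by (auto simp: fun_eq_iff)
  then show ?thesis
    using that n'(1) r(1) by blast
qed

lemma comps_unit_step:
  assumes t: "t \<in> comps q n" and t': "t' \<in> comps q n" and k: "(\<Sum>i<q. t i - t' i) = Suc k"
  obtains a b r n' where "n = Suc n'" "a < q" "b < q" "r \<in> words q n'"
    "composition (a # r) = t" "(\<Sum>i<q. composition (b # r) i - t' i) = k"
proof -
  have "t \<noteq> t'"
    using k by auto
  then obtain a b where a: "a < q" "t' a < t a" and b: "b < q" "t b < t' b"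
    using comps_exists_less[OF t t'] comps_exists_less[OF t' t] by metis
  obtain n' r where n': "n = Suc n'" and r: "r \<in> words q n'" "composition (a # r) = t"
    using word_Cons_of_composition[OF t a(1)] a(2) by auto
  have "composition r i = (t(a := t a - 1)) i" for i
    using fun_cong[OF r(2), of i] unfolding composition_Cons by (cases "i = a") auto
  then have r_comp: "composition r = t(a := t a - 1)" ..
  define h where "h i = t i - t' i" for i
  have "(\<Sum>i<q. composition (b # r) i - t' i) = sum (h(a := h a - 1)) {..<q}"
    using a b unfolding composition_Cons r_comp h_def by (intro sum.cong) auto
  also have "\<dots> = k"
    using sum_fun_upd_pred[of "{..<q}" a h] a k unfolding h_def by simp
  finally show ?thesis
    using that n' a(1) b(1) r by blast
qed

lemma card_positions_eq_count_list: "card {i. i < length x \<and> x ! i = c} = count_list x c"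
  unfolding count_list_eq_length_filter length_filter_conv_card by metis

lemma exists_frequent_symbol:
  assumes r: "set r \<subseteq> {..<q}" and q: "0 < q"
  obtains c where "c < q" "Suc (length r) \<le> q * Suc (count_list r c)"
proof -
  have "Max (count_list r ` {..<q}) \<in> count_list r ` {..<q}"
    using q by (intro Max_in) auto
  then obtain c where c: "c \<in> {..<q}" "count_list r c = Max (count_list r ` {..<q})"
    by auto
  have "length r = (\<Sum>c'<q. count_list r c')"
    using sum_count_set[OF r] by simp
  also have "\<dots> \<le> (\<Sum>c'<q. count_list r c)"
    using c by (intro sum_mono) simp
  finally have "length r \<le> q * count_list r c"
    by simp
  then show ?thesis
    using that c q by simp
qed

lemma d_c_eq_sum_diff:
  assumes t: "t \<in> comps q n" and t': "t' \<in> comps q n"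
  shows "d_c q t t' = (\<Sum>i<q. t i - t' i)"
proof -
  have abs: "\<bar>real (t i) - real (t' i)\<bar> = 2 * real (t i - t' i) - (real (t i) - real (t' i))" for i
    by (cases "t i \<le> t' i") auto
  have "(\<Sum>i<q. real (t i)) = (\<Sum>i<q. real (t' i))"
    using t t' unfolding comps_def of_nat_sum[symmetric] by simp
  then show ?thesis
    unfolding d_c_def abs sum_subtractf by (simp add: sum_distrib_left[symmetric])
qed

section \<open>The channel on words\<close>

definition chan_prob :: "(nat \<Rightarrow> nat \<Rightarrow> real) \<Rightarrow> nat list \<Rightarrow> nat list \<Rightarrow> real" where
  "chan_prob U x z = (\<Prod>k<length x. U (x ! k) (z ! k))"

definition chan_expect :: "nat \<Rightarrow> (nat \<Rightarrow> nat \<Rightarrow> real) \<Rightarrow> nat list \<Rightarrow> (nat list \<Rightarrow> real) \<Rightarrow> real" where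
  "chan_expect q U x g = (\<Sum>z\<in>words q (length x). chan_prob U x z * g z)"

definition out_prob :: "nat \<Rightarrow> (nat \<Rightarrow> nat \<Rightarrow> real) \<Rightarrow> nat list \<Rightarrow> (nat \<Rightarrow> nat) \<Rightarrow> real" where
  "out_prob q U x w = chan_expect q U x (\<lambda>z. of_bool (composition z = w))"

lemma chan_expect_cong:
  "(\<And>z. z \<in> words q (length x) \<Longrightarrow> f z = g z) \<Longrightarrow> chan_expect q U x f = chan_expect q U x g"
  unfolding chan_expect_def by (intro sum.cong) auto

lemma chan_expect_add: "chan_expect q U x (\<lambda>z. f z + g z) = chan_expect q U x f + chan_expect q U x g"
  unfolding chan_expect_def by (simp add: distrib_left sum.distrib)

lemma chan_expect_diff: "chan_expect q U x (\<lambda>z. f z - g z) = chan_expect q U x f - chan_expect q U x g"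
  unfolding chan_expect_def by (simp add: right_diff_distrib sum_subtractf)

lemma chan_expect_cmult: "chan_expect q U x (\<lambda>z. c * f z) = c * chan_expect q U x f"
  unfolding chan_expect_def by (simp add: sum_distrib_left mult_ac)

lemma chan_expect_sum: "chan_expect q U x (\<lambda>z. \<Sum>i\<in>I. f i z) = (\<Sum>i\<in>I. chan_expect q U x (f i))"
  unfolding chan_expect_def by (simp add: sum_distrib_left sum.swap[of _ I])

lemma chan_prob_Cons: "chan_prob U (c # r) (d # z) = U c d * chan_prob U r z"
  unfolding chan_prob_def by (simp del: prod.lessThan_Suc add: prod.lessThan_Suc_shift)

lemma chan_expect_Cons:
  "chan_expect q U (c # r) g = (\<Sum>d<q. U c d * chan_expect q U r (\<lambda>z. g (d # z)))"
  unfolding chan_expect_def by (simp add: sum_words_Suc chan_prob_Cons sum_distrib_left mult_ac)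

lemma sum_words_prod:
  "(\<Sum>z\<in>words q n. \<Prod>k<n. f k (z ! k)) = (\<Prod>k<n. \<Sum>c<q. (f k c :: real))"
proof (induction n arbitrary: f)
  case 0
  have "words q 0 = {[]}"
    unfolding words_def by auto
  then show ?case by simp
next
  case (Suc n)
  have "(\<Sum>z\<in>words q (Suc n). \<Prod>k<Suc n. f k (z ! k))
      = (\<Sum>d<q. \<Sum>z\<in>words q n. f 0 d * (\<Prod>k<n. f (Suc k) (z ! k)))"
    by (simp del: prod.lessThan_Suc add: sum_words_Suc prod.lessThan_Suc_shift)
  also have "\<dots> = (\<Sum>d<q. f 0 d) * (\<Prod>k<n. \<Sum>c<q. f (Suc k) c)"
    using Suc.IH[of "\<lambda>k. f (Suc k)"] by (simp add: sum_distrib_left[symmetric] sum_distrib_right)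
  also have "\<dots> = (\<Prod>k<Suc n. \<Sum>c<q. f k c)"
    by (simp del: prod.lessThan_Suc add: prod.lessThan_Suc_shift)
  finally show ?case .
qed

lemma chan_expect_prod:
  "chan_expect q U x (\<lambda>z. \<Prod>k<length x. f k (z ! k)) = (\<Prod>k<length x. \<Sum>c<q. U (x ! k) c * f k c)"
  unfolding chan_expect_def chan_prob_def prod.distrib[symmetric] by (rule sum_words_prod)

lemma bij_betw_permute_list_words:
  assumes "\<sigma> permutes {..<n}"
  shows "bij_betw (permute_list \<sigma>) (words q n) (words q n)"
proof (rule bij_betw_byWitness[where f' = "permute_list (inv \<sigma>)"])
  have inv: "inv \<sigma> permutes {..<n}"
    using assms by (rule permutes_inv)
  show "\<forall>z\<in>words q n. permute_list (inv \<sigma>) (permute_list \<sigma> z) = z"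
    using inv permutes_inv_o(1)[OF assms] unfolding words_def
    by (metis (mono_tags) mem_Collect_eq permute_list_compose permute_list_id)
  show "\<forall>z\<in>words q n. permute_list \<sigma> (permute_list (inv \<sigma>) z) = z"
    using assms permutes_inv_o(2)[OF assms] unfolding words_def
    by (metis (mono_tags) mem_Collect_eq permute_list_compose permute_list_id)
  show "permute_list \<sigma> ` words q n \<subseteq> words q n"
    using assms unfolding words_def by auto
  show "permute_list (inv \<sigma>) ` words q n \<subseteq> words q n"
    using inv unfolding words_def by auto
qed

lemma chan_prob_permute_list:
  assumes "\<sigma> permutes {..<length x}" "length z = length x"
  shows "chan_prob U (permute_list \<sigma> x) (permute_list \<sigma> z) = chan_prob U x z"
  using assms prod.permute[OF assms(1), of "\<lambda>k. U (x ! k) (z ! k)"]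
  unfolding chan_prob_def by (simp add: permute_list_nth comp_def)

lemma chan_expect_permute_list:
  assumes "\<sigma> permutes {..<length x}"
  shows "chan_expect q U (permute_list \<sigma> x) g = chan_expect q U x (\<lambda>z. g (permute_list \<sigma> z))"
proof -
  have "chan_expect q U (permute_list \<sigma> x) g
      = (\<Sum>z\<in>words q (length x). chan_prob U (permute_list \<sigma> x) (permute_list \<sigma> z) * g (permute_list \<sigma> z))"
    unfolding chan_expect_def length_permute_list
    by (rule sum.reindex_bij_betw[OF bij_betw_permute_list_words[OF assms], symmetric])
  also have "\<dots> = chan_expect q U x (\<lambda>z. g (permute_list \<sigma> z))"
    unfolding chan_expect_def using assms
    by (intro sum.cong refl) (simp add: chan_prob_permute_list words_def)
  finally show ?thesis .
qed

lemma out_prob_mset_eq: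
  assumes "mset x = mset y"
  shows "out_prob q U x w = out_prob q U y w"
proof -
  obtain \<sigma> where \<sigma>: "\<sigma> permutes {..<length y}" "permute_list \<sigma> y = x"
    using mset_eq_permutation[OF assms] by blast
  have "composition (permute_list \<sigma> z) = composition z" if "z \<in> words q (length y)" for z
    using that \<sigma>(1) by (intro composition_permute_list) (simp add: words_def)
  then show ?thesis
    unfolding out_prob_def \<sigma>(2)[symmetric] chan_expect_permute_list[OF \<sigma>(1)]
    unfolding chan_expect_def by (intro sum.cong) auto
qed

lemma ncc_eq_out_prob:
  assumes "y \<in> words q n" "composition y = t"
  shows "ncc q n U w t = out_prob q U y w"
proof -
  define x where "x = (SOME x. x \<in> words q n \<and> composition x = t)"
  have x: "x \<in> words q n" "composition x = t"
    using someI_ex[of "\<lambda>x. x \<in> words q n \<and> composition x = t"] assms unfolding x_def by blast+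
  then have "length x = n"
    unfolding words_def by simp
  then have "ncc q n U w t = out_prob q U x w"
    unfolding ncc_def out_prob_def chan_expect_def chan_prob_def x_def[symmetric] Let_def
    by (simp add: sum.inter_filter[OF finite_words, symmetric] of_bool_def if_distrib cong: if_cong)
  also have "\<dots> = out_prob q U y w"
    using x(2) assms(2) unfolding composition_def
    by (intro out_prob_mset_eq) (simp add: multiset_eq_iff fun_eq_iff flip: count_mset)
  finally show ?thesis .
qed

definition out_prob_plus :: "nat \<Rightarrow> (nat \<Rightarrow> nat \<Rightarrow> real) \<Rightarrow> nat list \<Rightarrow> nat \<Rightarrow> (nat \<Rightarrow> nat) \<Rightarrow> real" where
  "out_prob_plus q U r d w = chan_expect q U r (\<lambda>z. of_bool (composition (d # z) = w))"

lemma out_prob_Cons: "out_prob q U (c # r) w = (\<Sum>d<q. U c d * out_prob_plus q U r d w)"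
  unfolding out_prob_def out_prob_plus_def by (rule chan_expect_Cons)

lemma chan_expect_first_symbol:
  assumes "d < q"
  shows "chan_expect q U (c # r) (\<lambda>z. of_bool (composition z = w) * of_bool (z ! 0 = d))
    = U c d * out_prob_plus q U r d w"
proof -
  have "chan_expect q U r (\<lambda>z. of_bool (composition (e # z) = w) * of_bool (e = d))
      = (if e = d then out_prob_plus q U r d w else 0)" for e
    unfolding out_prob_plus_def chan_expect_def by simp
  then show ?thesis
    using assms unfolding chan_expect_Cons by (simp add: if_distrib[of "(*) _"] cong: if_cong)
qed

text \<open>The positions of the input carrying the first symbol are exchangeable: a transposition
  moving any of them to the front fixes the input and preserves the output composition.\<close>

lemma chan_expect_count_exchange:
  assumes G: "G \<subseteq> {i. i < length (c # r) \<and> (c # r) ! i = c}" and d: "d < q"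
  shows "chan_expect q U (c # r) (\<lambda>z. of_bool (composition z = w) * (\<Sum>i\<in>G. of_bool (z ! i = d)))
    = card G * (U c d * out_prob_plus q U r d w)"
proof -
  let ?x = "c # r"
  have "chan_expect q U ?x (\<lambda>z. of_bool (composition z = w) * of_bool (z ! i = d))
      = U c d * out_prob_plus q U r d w" if "i \<in> G" for i
  proof -
    define \<tau> where "\<tau> = Transposition.transpose 0 i"
    have i: "i < length ?x" "?x ! i = c"
      using that G by auto
    then have \<tau>: "\<tau> permutes {..<length ?x}"
      unfolding \<tau>_def by (intro permutes_swap_id) auto
    have fix_x: "permute_list \<tau> ?x = ?x"
      using \<tau> i unfolding \<tau>_def
      by (intro nth_equalityI) (auto simp: permute_list_nth Transposition.transpose_def)
    have "U c d * out_prob_plus q U r d w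
        = chan_expect q U (permute_list \<tau> ?x) (\<lambda>z. of_bool (composition z = w) * of_bool (z ! 0 = d))"
      unfolding fix_x chan_expect_first_symbol[OF d] ..
    also have "\<dots> = chan_expect q U ?x
        (\<lambda>z. of_bool (composition (permute_list \<tau> z) = w) * of_bool (permute_list \<tau> z ! 0 = d))"
      by (rule chan_expect_permute_list[OF \<tau>])
    also have "\<dots> = chan_expect q U ?x (\<lambda>z. of_bool (composition z = w) * of_bool (z ! i = d))"
      using \<tau> i unfolding \<tau>_def
      by (intro chan_expect_cong) (simp add: words_def composition_permute_list permute_list_nth)
    finally show ?thesis ..
  qed
  then show ?thesis
    by (simp add: sum_distrib_left chan_expect_sum)
qed

definition ncc_dist :: "nat \<Rightarrow> nat \<Rightarrow> (nat \<Rightarrow> nat \<Rightarrow> real) \<Rightarrow> (nat \<Rightarrow> nat) \<Rightarrow> (nat \<Rightarrow> nat) \<Rightarrow> real" where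
  "ncc_dist q n U t t' = (\<Sum>w\<in>comps q n. \<bar>ncc q n U w t - ncc q n U w t'\<bar>)"

lemma ncc_dist_self: "ncc_dist q n U t t = 0"
  unfolding ncc_dist_def by simp

lemma ncc_dist_triangle: "ncc_dist q n U t t' \<le> ncc_dist q n U t s + ncc_dist q n U s t'"
  unfolding ncc_dist_def sum.distrib[symmetric] by (intro sum_mono) linarith

lemma ncc_output_diff:
  assumes ts: "\<forall>i<k. ts i \<in> comps q n \<and> ts' i \<in> comps q n"
    and Q: "\<forall>t\<in>comps q n.
      Q2 t = Q1 t + (\<Sum>i<k. p i * ((if t = ts' i then 1 else 0) - (if t = ts i then 1 else 0)))"
  shows "ncc_output q n U Q1 w - ncc_output q n U Q2 w
    = (\<Sum>i<k. p i * (ncc q n U w (ts i) - ncc q n U w (ts' i)))"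
proof -
  have "ncc_output q n U Q1 w - ncc_output q n U Q2 w = (\<Sum>t\<in>comps q n. (Q1 t - Q2 t) * ncc q n U w t)"
    unfolding ncc_output_def by (simp add: sum_subtractf left_diff_distrib)
  also have "\<dots> = (\<Sum>t\<in>comps q n. \<Sum>i<k. p i *
      ((if t = ts i then ncc q n U w t else 0) - (if t = ts' i then ncc q n U w t else 0)))"
  proof (intro sum.cong refl)
    fix t
    assume "t \<in> comps q n"
    then have diff:
      "Q1 t - Q2 t = (\<Sum>i<k. p i * ((if t = ts i then 1 else 0) - (if t = ts' i then 1 else 0)))"
      using Q by (simp add: sum_negf[symmetric] algebra_simps)
    show "(Q1 t - Q2 t) * ncc q n U w t = (\<Sum>i<k. p i *
        ((if t = ts i then ncc q n U w t else 0) - (if t = ts' i then ncc q n U w t else 0)))"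
      unfolding diff sum_distrib_right by (intro sum.cong) auto
  qed
  also have "\<dots> = (\<Sum>i<k. p i * ((\<Sum>t\<in>comps q n. if t = ts i then ncc q n U w t else 0)
      - (\<Sum>t\<in>comps q n. if t = ts' i then ncc q n U w t else 0)))"
    by (simp add: sum.swap[of _ "comps q n"] sum_distrib_left sum_subtractf right_diff_distrib)
  also have "\<dots> = (\<Sum>i<k. p i * (ncc q n U w (ts i) - ncc q n U w (ts' i)))"
    using ts by (intro sum.cong) (simp_all add: finite_comps)
  finally show ?thesis .
qed

section \<open>Bounds for a stochastic channel\<close>

context
  fixes q :: nat and U :: "nat \<Rightarrow> nat \<Rightarrow> real"
  assumes U_nonneg: "\<And>a b. a < q \<Longrightarrow> b < q \<Longrightarrow> 0 \<le> U a b"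
    and U_row_sum: "\<And>a. a < q \<Longrightarrow> (\<Sum>b<q. U a b) = 1"
begin

lemma chan_prob_nonneg:
  assumes "set x \<subseteq> {..<q}" "z \<in> words q (length x)"
  shows "0 \<le> chan_prob U x z"
  using assms unfolding chan_prob_def words_def
  by (intro prod_nonneg) (auto intro!: U_nonneg nth_less_bound)

lemma chan_expect_mono:
  assumes "set x \<subseteq> {..<q}" "\<And>z. z \<in> words q (length x) \<Longrightarrow> f z \<le> g z"
  shows "chan_expect q U x f \<le> chan_expect q U x g"
  unfolding chan_expect_def using assms chan_prob_nonneg
  by (intro sum_mono mult_left_mono) auto

lemma chan_expect_const:
  assumes "set x \<subseteq> {..<q}"
  shows "chan_expect q U x (\<lambda>z. c) = c"
proof -
  have "chan_expect q U x (\<lambda>z. \<Prod>k<length x. 1) = 1"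
    using assms chan_expect_prod[of q U x "\<lambda>k c. 1"] by (simp add: U_row_sum nth_less_bound)
  then show ?thesis
    using chan_expect_cmult[of q U x c "\<lambda>z. 1"] by simp
qed

lemma chan_expect_indicators:
  assumes x: "set x \<subseteq> {..<q}" and S: "S \<subseteq> {..<length x}" and d: "d < q"
  shows "chan_expect q U x (\<lambda>z. \<Prod>k\<in>S. of_bool (z ! k = d)) = (\<Prod>k\<in>S. U (x ! k) d)"
proof -
  have restrict: "prod f S = (\<Prod>k<length x. if k \<in> S then f k else 1)" for f :: "nat \<Rightarrow> real"
    using prod.inter_restrict[of "{..<length x}" f S] S by (simp add: Int_absorb1)
  have row: "(\<Sum>c<q. U (x ! k) c * (if k \<in> S then of_bool (c = d) else 1))
      = (if k \<in> S then U (x ! k) d else 1)" if "k < length x" for k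
    using that x d U_row_sum[of "x ! k"] by (cases "k \<in> S") (simp_all add: nth_less_bound)
  show ?thesis
    unfolding restrict chan_expect_prod[of q U x "\<lambda>k c. if k \<in> S then of_bool (c = d) else 1"]
    by (intro prod.cong) (simp_all add: row)
qed

lemma chan_expect_abs_le_sqrt:
  assumes "set x \<subseteq> {..<q}"
  shows "chan_expect q U x (\<lambda>z. \<bar>X z\<bar>) \<le> sqrt (chan_expect q U x (\<lambda>z. (X z)\<^sup>2))"
proof (rule real_le_rsqrt)
  define \<mu> where "\<mu> = chan_expect q U x (\<lambda>z. \<bar>X z\<bar>)"
  have "0 \<le> chan_expect q U x (\<lambda>z. (\<bar>X z\<bar> - \<mu>)\<^sup>2)"
    using chan_expect_mono[OF assms, of "\<lambda>z. 0"] chan_expect_const[OF assms, of 0] by simp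
  also have "\<dots> = chan_expect q U x (\<lambda>z. (X z)\<^sup>2 - (2 * \<mu>) * \<bar>X z\<bar> + \<mu>\<^sup>2)"
    by (rule arg_cong[where f = "chan_expect q U x"]) (simp add: fun_eq_iff power2_diff algebra_simps)
  also have "\<dots> = chan_expect q U x (\<lambda>z. (X z)\<^sup>2) - \<mu>\<^sup>2"
    unfolding chan_expect_add chan_expect_diff chan_expect_cmult chan_expect_const[OF assms]
      \<mu>_def[symmetric] by (simp add: power2_eq_square)
  finally show "\<mu>\<^sup>2 \<le> chan_expect q U x (\<lambda>z. (X z)\<^sup>2)" by simp
qed

lemma chan_expect_count:
  assumes x: "set x \<subseteq> {..<q}" and G: "G \<subseteq> {i. i < length x \<and> x ! i = c}" and d: "d < q"
  shows "chan_expect q U x (\<lambda>z. \<Sum>i\<in>G. of_bool (z ! i = d)) = card G * U c d"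
proof -
  have "chan_expect q U x (\<lambda>z. of_bool (z ! i = d)) = U c d" if "i \<in> G" for i
    using chan_expect_indicators[OF x _ d, of "{i}"] that G by auto
  then show ?thesis
    by (simp add: chan_expect_sum)
qed

lemma chan_expect_count_sq:
  assumes x: "set x \<subseteq> {..<q}" and G: "G \<subseteq> {i. i < length x \<and> x ! i = c}" and d: "d < q"
  shows "chan_expect q U x (\<lambda>z. (\<Sum>i\<in>G. of_bool (z ! i = d))\<^sup>2)
    = card G * U c d + card G * (real (card G) - 1) * (U c d)\<^sup>2"
proof -
  have fin: "finite G"
    using G by (rule finite_subset) simp
  have pair: "chan_expect q U x (\<lambda>z. of_bool (z ! i = d) * of_bool (z ! j = d))
      = (if i = j then U c d else (U c d)\<^sup>2)" if "i \<in> G" "j \<in> G" for i j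
  proof -
    have ij: "i < length x" "x ! i = c" "j < length x" "x ! j = c"
      using that G by auto
    show ?thesis
    proof (cases "i = j")
      case True
      then show ?thesis
        using chan_expect_indicators[OF x _ d, of "{i}"] ij by (simp flip: of_bool_conj)
    next
      case False
      then show ?thesis
        using chan_expect_indicators[OF x _ d, of "{i, j}"] ij by (simp add: power2_eq_square)
    qed
  qed
  have row: "(\<Sum>j\<in>G. if i = j then U c d else (U c d)\<^sup>2) = U c d + (real (card G) - 1) * (U c d)\<^sup>2"
    if "i \<in> G" for i
  proof -
    have "1 \<le> card G"
      using that fin by (metis card_0_eq empty_iff less_one not_le)
    then show ?thesis
      using that fin by (simp add: sum.remove)
  qed
  have "chan_expect q U x (\<lambda>z. (\<Sum>i\<in>G. of_bool (z ! i = d))\<^sup>2)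
      = (\<Sum>i\<in>G. \<Sum>j\<in>G. chan_expect q U x (\<lambda>z. of_bool (z ! i = d) * of_bool (z ! j = d)))"
    unfolding power2_eq_square sum_product by (simp add: chan_expect_sum)
  also have "\<dots> = (\<Sum>i\<in>G. U c d + (real (card G) - 1) * (U c d)\<^sup>2)"
    using pair row by simp
  finally show ?thesis
    by (simp add: algebra_simps)
qed

lemma chan_expect_count_deviation:
  assumes x: "set x \<subseteq> {..<q}" and G: "G \<subseteq> {i. i < length x \<and> x ! i = c}" and d: "d < q"
    and m: "0 < card G" and \<pi>: "0 < U c d"
  shows "chan_expect q U x (\<lambda>z. \<bar>(\<Sum>i\<in>G. of_bool (z ! i = d)) / (card G * U c d) - 1\<bar>)
    \<le> 1 / sqrt (card G * U c d)"
proof -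
  define N where "N z = (\<Sum>i\<in>G. of_bool (z ! i = d) :: real)" for z
  define \<mu> where "\<mu> = card G * U c d"
  have \<mu>: "0 < \<mu>"
    using m \<pi> unfolding \<mu>_def by simp
  have "chan_expect q U x (\<lambda>z. (N z / \<mu> - 1)\<^sup>2)
      = chan_expect q U x (\<lambda>z. (1 / \<mu>\<^sup>2) * (N z)\<^sup>2 - (2 / \<mu>) * N z + 1)"
    using \<mu> by (intro arg_cong[where f = "chan_expect q U x"])
      (simp add: fun_eq_iff field_simps power2_eq_square)
  also have "\<dots> = (1 / \<mu>\<^sup>2) * (card G * U c d + card G * (real (card G) - 1) * (U c d)\<^sup>2)
      - (2 / \<mu>) * \<mu> + 1"
    unfolding chan_expect_add chan_expect_diff chan_expect_cmult chan_expect_const[OF x] N_def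
      chan_expect_count[OF x G d] chan_expect_count_sq[OF x G d] \<mu>_def ..
  also have "\<dots> = 1 / \<mu> - 1 / card G"
    using m \<pi> unfolding \<mu>_def by (simp add: field_simps power2_eq_square)
  also have "\<dots> \<le> 1 / \<mu>"
    by simp
  finally have "chan_expect q U x (\<lambda>z. (N z / \<mu> - 1)\<^sup>2) \<le> 1 / \<mu>" .
  then have "chan_expect q U x (\<lambda>z. \<bar>N z / \<mu> - 1\<bar>) \<le> sqrt (1 / \<mu>)"
    using chan_expect_abs_le_sqrt[OF x, of "\<lambda>z. N z / \<mu> - 1"] real_sqrt_le_mono order_trans by blast
  then show ?thesis
    unfolding N_def \<mu>_def by (simp add: real_sqrt_divide)
qed

lemma abs_chan_expect_le:
  assumes "set x \<subseteq> {..<q}"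
  shows "\<bar>chan_expect q U x f\<bar> \<le> chan_expect q U x (\<lambda>z. \<bar>f z\<bar>)"
  unfolding chan_expect_def
  using assms chan_prob_nonneg by (intro order_trans[OF sum_abs] sum_mono) (simp add: abs_mult)

lemma sum_comps_abs_chan_expect_le:
  assumes x: "set x \<subseteq> {..<q}"
  shows "(\<Sum>w\<in>comps q (length x). \<bar>chan_expect q U x (\<lambda>z. of_bool (composition z = w) * Y z)\<bar>)
    \<le> chan_expect q U x (\<lambda>z. \<bar>Y z\<bar>)"
proof -
  have "(\<Sum>w\<in>comps q (length x). \<bar>chan_expect q U x (\<lambda>z. of_bool (composition z = w) * Y z)\<bar>)
      \<le> (\<Sum>w\<in>comps q (length x). chan_expect q U x (\<lambda>z. of_bool (composition z = w) * \<bar>Y z\<bar>))"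
    by (intro sum_mono order_trans[OF abs_chan_expect_le[OF x]] eq_refl) (simp add: abs_mult)
  also have "\<dots> = chan_expect q U x (\<lambda>z. \<Sum>w\<in>comps q (length x). of_bool (composition z = w) * \<bar>Y z\<bar>)"
    by (simp add: chan_expect_sum)
  also have "\<dots> = chan_expect q U x (\<lambda>z. \<bar>Y z\<bar>)"
    by (intro chan_expect_cong)
      (simp add: finite_comps composition_in_comps of_bool_def if_distrib[of "\<lambda>v. v * _"] cong: if_cong)
  finally show ?thesis .
qed

text \<open>Writing N_b z for the number of positions of G with output symbol b, exchangeability
  gives out_prob_plus q U r b w = E [1{composition z = w} N_b z] / (card G * U c b), so the L1
  distance is at most the sum of the mean deviations of the two rescaled counts from 1.\<close>

lemma out_prob_plus_l1_le:
  assumes x: "set (c # r) \<subseteq> {..<q}" and G: "G \<subseteq> {i. i < length (c # r) \<and> (c # r) ! i = c}"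
    and m: "0 < card G" and d: "d < q" "0 < U c d" and e: "e < q" "0 < U c e"
  shows "(\<Sum>w\<in>comps q (length (c # r)). \<bar>out_prob_plus q U r d w - out_prob_plus q U r e w\<bar>)
    \<le> 1 / sqrt (card G * U c d) + 1 / sqrt (card G * U c e)"
proof -
  define X where "X b z = (\<Sum>i\<in>G. of_bool (z ! i = b)) / (card G * U c b) - 1" for b z
  have plus: "out_prob_plus q U r b w
      = chan_expect q U (c # r) (\<lambda>z. of_bool (composition z = w) * (X b z + 1))"
    if "b < q" "0 < U c b" for b w
  proof -
    have rescale: "(\<lambda>z. of_bool (composition z = w) * (X b z + 1))
        = (\<lambda>z. (1 / (card G * U c b)) * (of_bool (composition z = w) * (\<Sum>i\<in>G. of_bool (z ! i = b))))"
      unfolding X_def by (simp add: fun_eq_iff)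
    show ?thesis
      using m that unfolding rescale chan_expect_cmult chan_expect_count_exchange[OF G that(1)] by simp
  qed
  have "(\<Sum>w\<in>comps q (length (c # r)). \<bar>out_prob_plus q U r d w - out_prob_plus q U r e w\<bar>)
      = (\<Sum>w\<in>comps q (length (c # r)).
          \<bar>chan_expect q U (c # r) (\<lambda>z. of_bool (composition z = w) * (X d z - X e z))\<bar>)"
    unfolding plus[OF d] plus[OF e] chan_expect_diff[symmetric] by (simp add: algebra_simps)
  also have "\<dots> \<le> chan_expect q U (c # r) (\<lambda>z. \<bar>X d z - X e z\<bar>)"
    by (rule sum_comps_abs_chan_expect_le[OF x])
  also have "\<dots> \<le> chan_expect q U (c # r) (\<lambda>z. \<bar>X d z\<bar> + \<bar>X e z\<bar>)"
    using x by (intro chan_expect_mono) auto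
  also have "\<dots> \<le> 1 / sqrt (card G * U c d) + 1 / sqrt (card G * U c e)"
    unfolding chan_expect_add X_def
    using chan_expect_count_deviation[OF x G d(1) m d(2)] chan_expect_count_deviation[OF x G e(1) m e(2)]
    by (rule add_mono)
  finally show ?thesis .
qed

lemma mixture_l1_le:
  assumes a: "a < q" and b: "b < q"
    and F: "\<And>d e. d < q \<Longrightarrow> e < q \<Longrightarrow> (\<Sum>w\<in>W. \<bar>F d w - F e w\<bar>) \<le> B"
  shows "(\<Sum>w\<in>W. \<bar>(\<Sum>d<q. U a d * F d w) - (\<Sum>e<q. U b e * F e w)\<bar>) \<le> B"
proof -
  have diff: "(\<Sum>d<q. U a d * F d w) - (\<Sum>e<q. U b e * F e w)
      = (\<Sum>d<q. \<Sum>e<q. U a d * U b e * (F d w - F e w))" for w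
    using U_row_sum[OF a] U_row_sum[OF b]
    by (simp add: right_diff_distrib sum_subtractf sum_distrib_left[symmetric]
        sum_distrib_right[symmetric] mult.assoc mult.left_commute[of "U b _"])
  have weight: "0 \<le> U a d * U b e" if "d < q" "e < q" for d e
    using that a b U_nonneg by simp
  have "(\<Sum>w\<in>W. \<bar>(\<Sum>d<q. U a d * F d w) - (\<Sum>e<q. U b e * F e w)\<bar>)
      \<le> (\<Sum>w\<in>W. \<Sum>d<q. \<Sum>e<q. U a d * U b e * \<bar>F d w - F e w\<bar>)"
    unfolding diff using weight
    by (intro sum_mono order_trans[OF sum_abs] order_trans[OF sum_mono[OF sum_abs]])
      (simp add: abs_mult U_nonneg a b)
  also have "\<dots> = (\<Sum>d<q. \<Sum>e<q. U a d * U b e * (\<Sum>w\<in>W. \<bar>F d w - F e w\<bar>))"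
    by (simp add: sum.swap[of _ W] sum_distrib_left)
  also have "\<dots> \<le> (\<Sum>d<q. \<Sum>e<q. U a d * U b e * B)"
    using weight F by (intro sum_mono mult_left_mono) auto
  also have "\<dots> = B"
    using U_row_sum[OF a] U_row_sum[OF b]
    by (simp add: sum_distrib_right[symmetric] sum_distrib_left[symmetric] mult.commute)
  finally show ?thesis .
qed

context
  fixes u :: real
  assumes u_pos: "0 < u" and u_le: "\<And>a b. a < q \<Longrightarrow> b < q \<Longrightarrow> u \<le> U a b"
begin

lemma out_prob_Cons_l1_le:
  assumes r: "set r \<subseteq> {..<q}" and a: "a < q" and b: "b < q"
  shows "(\<Sum>w\<in>comps q (Suc (length r)). \<bar>out_prob q U (a # r) w - out_prob q U (b # r) w\<bar>)
    \<le> 2 * sqrt (q / u) / sqrt (Suc (length r))"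
proof -
  obtain c where c: "c < q" and freq: "Suc (length r) \<le> q * Suc (count_list r c)"
    using exists_frequent_symbol[OF r] a by auto
  define G where "G = {i. i < length (c # r) \<and> (c # r) ! i = c}"
  have m: "card G = Suc (count_list r c)"
    unfolding G_def card_positions_eq_count_list by simp
  have x: "set (c # r) \<subseteq> {..<q}"
    using r c by simp
  have Ucd: "0 < U c d" if "d < q" for d
    using u_pos u_le[OF c that] by simp
  have dev: "1 / sqrt (card G * U c d) \<le> sqrt (q / u) / sqrt (Suc (length r))" if d: "d < q" for d
  proof -
    have "real (Suc (length r)) * u \<le> q * card G * u"
      using freq u_pos unfolding m by (intro mult_right_mono) (simp_all flip: of_nat_mult)
    also have "\<dots> \<le> q * card G * U c d"
      using u_le[OF c d] by (intro mult_left_mono) simp_all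
    finally have "real (Suc (length r)) \<le> q / u * (card G * U c d)"
      using u_pos by (simp add: field_simps)
    then have "sqrt (Suc (length r)) \<le> sqrt (q / u) * sqrt (card G * U c d)"
      by (metis real_sqrt_le_mono real_sqrt_mult)
    moreover have "0 < card G * U c d"
      using m Ucd[OF d] by simp
    ultimately show ?thesis
      by (simp add: field_simps)
  qed
  have pair: "(\<Sum>w\<in>comps q (Suc (length r)). \<bar>out_prob_plus q U r d w - out_prob_plus q U r e w\<bar>)
      \<le> 2 * sqrt (q / u) / sqrt (Suc (length r))" if "d < q" "e < q" for d e
    using out_prob_plus_l1_le[OF x _ _ that(1) Ucd[OF that(1)] that(2) Ucd[OF that(2)], of G]
      dev[OF that(1)] dev[OF that(2)] m unfolding G_def by simp
  show ?thesis
    unfolding out_prob_Cons by (rule mixture_l1_le[OF a b pair])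
qed

lemma ncc_dist_Cons_le:
  assumes r: "r \<in> words q n" and a: "a < q" and b: "b < q"
  shows "ncc_dist q (Suc n) U (composition (a # r)) (composition (b # r))
    \<le> 2 * sqrt (q / u) / sqrt (Suc n)"
proof -
  have ar: "a # r \<in> words q (Suc n)" and br: "b # r \<in> words q (Suc n)"
    using r a b unfolding words_def by auto
  show ?thesis
    using out_prob_Cons_l1_le[OF _ a b, of r] r
    unfolding ncc_dist_def ncc_eq_out_prob[OF ar refl] ncc_eq_out_prob[OF br refl]
    by (simp add: words_def)
qed

lemma ncc_dist_le_d_c:
  assumes "t \<in> comps q n" "t' \<in> comps q n"
  shows "ncc_dist q n U t t' \<le> 2 * sqrt (q / u) / sqrt n * d_c q t t'"
  unfolding d_c_eq_sum_diff[OF assms]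
  using assms
proof (induction "\<Sum>i<q. t i - t' i" arbitrary: t)
  case 0
  then have "t i \<le> t' i" if "i < q" for i
    using that by simp
  then have "t = t'"
    using comps_eqI 0 by blast
  then show ?case
    by (simp add: ncc_dist_self)
next
  case (Suc k)
  obtain a b r n' where n': "n = Suc n'" and ab: "a < q" "b < q" and r: "r \<in> words q n'"
    and t: "composition (a # r) = t" and k: "(\<Sum>i<q. composition (b # r) i - t' i) = k"
    using comps_unit_step[OF Suc.prems Suc.hyps(2)[symmetric]] .
  have "b # r \<in> words q n"
    using r ab n' unfolding words_def by auto
  then have IH: "ncc_dist q n U (composition (b # r)) t' \<le> 2 * sqrt (q / u) / sqrt n * k"
    using Suc.hyps(1)[of "composition (b # r)"] k Suc.prems(2) composition_in_comps by simp
  have "ncc_dist q n U t t'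
      \<le> ncc_dist q n U t (composition (b # r)) + ncc_dist q n U (composition (b # r)) t'"
    by (rule ncc_dist_triangle)
  also have "\<dots> \<le> 2 * sqrt (q / u) / sqrt n + 2 * sqrt (q / u) / sqrt n * k"
    using ncc_dist_Cons_le[OF r ab] IH n' t by (intro add_mono) auto
  finally show ?case
    using Suc.hyps(2)[symmetric] by (simp add: algebra_simps add_divide_distrib)
qed

lemma d_tv_ncc_output_le:
  assumes ts: "\<forall>i<k. ts i \<in> comps q n \<and> ts' i \<in> comps q n \<and> p i \<ge> 0"
    and Q: "\<forall>t\<in>comps q n.
      Q2 t = Q1 t + (\<Sum>i<k. p i * ((if t = ts' i then 1 else 0) - (if t = ts i then 1 else 0)))"
  shows "d_tv q n (ncc_output q n U Q1) (ncc_output q n U Q2)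
    \<le> sqrt (q / u) / sqrt n * (\<Sum>i<k. p i * d_c q (ts i) (ts' i))"
proof -
  have "\<bar>ncc_output q n U Q1 w - ncc_output q n U Q2 w\<bar>
      \<le> (\<Sum>i<k. p i * \<bar>ncc q n U w (ts i) - ncc q n U w (ts' i)\<bar>)" for w
  proof -
    have ts': "\<forall>i<k. ts i \<in> comps q n \<and> ts' i \<in> comps q n"
      using ts by blast
    show ?thesis
      unfolding ncc_output_diff[OF ts' Q] using ts
      by (intro order_trans[OF sum_abs] sum_mono) (simp add: abs_mult)
  qed
  then have "(\<Sum>w\<in>comps q n. \<bar>ncc_output q n U Q1 w - ncc_output q n U Q2 w\<bar>)
      \<le> (\<Sum>w\<in>comps q n. \<Sum>i<k. p i * \<bar>ncc q n U w (ts i) - ncc q n U w (ts' i)\<bar>)"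
    by (rule sum_mono)
  also have "\<dots> = (\<Sum>i<k. p i * ncc_dist q n U (ts i) (ts' i))"
    unfolding ncc_dist_def by (simp add: sum.swap[of _ "comps q n"] sum_distrib_left)
  also have "\<dots> \<le> (\<Sum>i<k. p i * (2 * sqrt (q / u) / sqrt n * d_c q (ts i) (ts' i)))"
    using ts ncc_dist_le_d_c by (intro sum_mono mult_left_mono) auto
  also have "\<dots> = 2 * (sqrt (q / u) / sqrt n * (\<Sum>i<k. p i * d_c q (ts i) (ts' i)))"
    by (simp add: sum_distrib_left mult_ac)
  finally show ?thesis
    unfolding d_tv_def by (simp add: mult_ac)
qed

end

end

theorem lemma5:
  fixes q :: nat and U :: "nat \<Rightarrow> nat \<Rightarrow> real"
  assumes "q \<ge> 2"
    and "\<And>a b. a < q \<Longrightarrow> b < q \<Longrightarrow> U a b > 0"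
    and "\<And>a. a < q \<Longrightarrow> (\<Sum>b<q. U a b) = 1"
  shows "\<exists>C4::real. \<exists>N0::nat. \<forall>n\<ge>N0. \<forall>(k::nat) (ts::nat \<Rightarrow> nat \<Rightarrow> nat) (ts'::nat \<Rightarrow> nat \<Rightarrow> nat)
           (p::nat \<Rightarrow> real) Q1 Q2.
     k \<ge> 1 \<longrightarrow>
     (\<forall>i<k. ts i \<in> comps q n \<and> ts' i \<in> comps q n \<and> p i \<ge> 0) \<longrightarrow>
     is_dist q n Q1 \<longrightarrow> is_dist q n Q2 \<longrightarrow>
     (\<forall>t\<in>comps q n. Q2 t = Q1 t + (\<Sum>i<k. p i * ((if t = ts' i then 1 else 0) - (if t = ts i then 1 else 0)))) \<longrightarrow>
     d_tv q n (ncc_output q n U Q1) (ncc_output q n U Q2)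
       \<le> C4 * (log 2 (real n)) powr ((real q - 2) / 2) / sqrt (real n) * (\<Sum>i<k. p i * d_c q (ts i) (ts' i))"
proof -
  define u where "u = Min ((\<lambda>(a, b). U a b) ` ({..<q} \<times> {..<q}))"
  have "u \<in> (\<lambda>(a, b). U a b) ` ({..<q} \<times> {..<q})"
    unfolding u_def using assms(1) by (intro Min_in) (auto simp: lessThan_empty_iff)
  then have u_pos: "0 < u"
    using assms(2) by auto
  have u_le: "u \<le> U a b" if "a < q" "b < q" for a b
    unfolding u_def using that by (intro Min_le) auto
  have U_nonneg: "0 \<le> U a b" if "a < q" "b < q" for a b
    using assms(2)[OF that] by simp
  show ?thesis
  proof (intro exI[of _ "sqrt (q / u)"] exI[of _ 2] allI impI)
    fix n k :: nat and ts ts' :: "nat \<Rightarrow> nat \<Rightarrow> nat" and p :: "nat \<Rightarrow> real"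
      and Q1 Q2 :: "(nat \<Rightarrow> nat) \<Rightarrow> real"
    assume n: "2 \<le> n" and ts: "\<forall>i<k. ts i \<in> comps q n \<and> ts' i \<in> comps q n \<and> 0 \<le> p i"
      and Q: "\<forall>t\<in>comps q n.
        Q2 t = Q1 t + (\<Sum>i<k. p i * ((if t = ts' i then 1 else 0) - (if t = ts i then 1 else 0)))"
    define L where "L = log 2 (real n) powr ((real q - 2) / 2)"
    define D where "D = (\<Sum>i<k. p i * d_c q (ts i) (ts' i))"
    have "0 \<le> sqrt (q / u) / sqrt n * D"
      using ts u_pos unfolding D_def d_c_def by (intro mult_nonneg_nonneg sum_nonneg) auto
    moreover have "1 \<le> L"
      unfolding L_def using n assms(1) by (intro ge_one_powr_ge_zero) auto
    ultimately have "sqrt (q / u) / sqrt n * D \<le> sqrt (q / u) * L / sqrt n * D"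
      using mult_left_mono[of 1 L "sqrt (q / u) / sqrt n * D"] by (simp add: mult_ac)
    moreover have "d_tv q n (ncc_output q n U Q1) (ncc_output q n U Q2) \<le> sqrt (q / u) / sqrt n * D"
      unfolding D_def
      by (rule d_tv_ncc_output_le[where q = q and U = U and u = u, OF U_nonneg assms(3) u_pos u_le ts Q])
    ultimately show "d_tv q n (ncc_output q n U Q1) (ncc_output q n U Q2)
        \<le> sqrt (q / u) * log 2 (real n) powr ((real q - 2) / 2) / sqrt n * D"
      unfolding L_def by linarith
  qed
qed

end
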